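(* Let $X\subset\mathbb{R}^n$ be a finite set of points and let $G\subset\mathbb{R}[x_1,\ldots,x_n]$ be a set of polynomials with $\mathcal I(X)=\langle G\rangle$. Let $t$ be a positive integer and suppose that every $\widetilde g\in\mathcal I(X)$ of degree at most $t$ satisfies $\widetilde g\in\langle G^t\rangle$. Then for any $g\in\mathcal I(X)$ of degree at most $t+1$, if $(\partial g/\partial x_k)(X)=\boldsymbol 0$ for all $k\in\{1,\ldots,n\}$, then $g\in\langle G^t\rangle$.
   Context: $\mathcal I(X)=\{g\in\mathbb{R}[x_1,\ldots,x_n]:g(\boldsymbol x)=0\ \forall\boldsymbol x\in X\}$; for a polynomial $h$, $h(X)$ is the vector of its values at the points of $X$. $\langle S\rangle$ is the ideal generated by $S$; $G^t$ is the set of elements of $G$ of degree at most $t$. *)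

theory Defs
  imports Complex_Main "HOL-Library.Poly_Mapping"
begin

text \<open>Multivariate real polynomials: finitely supported maps from monomials
(exponent vectors) to real coefficients.  Variable x_(k+1) of the
paper is index k here; R[x_1..x_n] is the set of polynomials using only
variables with index < n.  Points of R^n are functions nat \<Rightarrow> real that vanish
at indices \<ge> n.\<close>

type_synonym mpoly = "((nat, nat) poly_mapping, real) poly_mapping"

definition poly_ring :: "nat \<Rightarrow> mpoly set" where
  "poly_ring n = {p. \<forall>m \<in> Poly_Mapping.keys p. Poly_Mapping.keys m \<subseteq> {..<n}}"

definition point_space :: "nat \<Rightarrow> (nat \<Rightarrow> real) set" where
  "point_space n = {x. \<forall>i\<ge>n. x i = 0}"

definition eval_mpoly :: "mpoly \<Rightarrow> (nat \<Rightarrow> real) \<Rightarrow> real" where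
  "eval_mpoly p x = (\<Sum>m\<in>Poly_Mapping.keys p. Poly_Mapping.lookup p m * (\<Prod>i\<in>Poly_Mapping.keys m. x i ^ Poly_Mapping.lookup m i))"

definition mon_deg :: "(nat, nat) poly_mapping \<Rightarrow> nat" where
  "mon_deg m = (\<Sum>i\<in>Poly_Mapping.keys m. Poly_Mapping.lookup m i)"

text \<open>Total degree (the zero polynomial gets degree 0).\<close>
definition total_deg :: "mpoly \<Rightarrow> nat" where
  "total_deg p = Max (insert 0 (mon_deg ` Poly_Mapping.keys p))"

definition pderiv_mpoly :: "nat \<Rightarrow> mpoly \<Rightarrow> mpoly" where
  "pderiv_mpoly k p =
     (\<Sum>m\<in>Poly_Mapping.keys p. Poly_Mapping.single (m - Poly_Mapping.single k 1)
                    (of_nat (Poly_Mapping.lookup m k) * Poly_Mapping.lookup p m))"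

definition vanishing_ideal :: "nat \<Rightarrow> (nat \<Rightarrow> real) set \<Rightarrow> mpoly set" where
  "vanishing_ideal n X = {g \<in> poly_ring n. \<forall>x\<in>X. eval_mpoly g x = 0}"

definition ideal_gen :: "nat \<Rightarrow> mpoly set \<Rightarrow> mpoly set" where
  "ideal_gen n S = {p. \<exists>F c. finite F \<and> F \<subseteq> S \<and> (\<forall>s\<in>F. c s \<in> poly_ring n)
                         \<and> p = (\<Sum>s\<in>F. c s * s)}"

definition deg_trunc :: "mpoly set \<Rightarrow> nat \<Rightarrow> mpoly set" where
  "deg_trunc G t = {g \<in> G. total_deg g \<le> t}"

end

theory Submission
  imports Defs
begin

text \<open>Euler's identity \<open>\<Sum>\<^sub>k x\<^sub>k \<partial>g/\<partial>x\<^sub>k = \<Sum>\<^sub>m |m| g\<^sub>m x\<^sup>m\<close> multiplies every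
monomial of \<open>g\<close> by its degree.  Hence \<open>h = g - (t+1)\<^sup>-\<^sup>1 \<Sum>\<^sub>k x\<^sub>k \<partial>g/\<partial>x\<^sub>k\<close> has no
terms of degree \<open>t+1\<close>, so \<open>deg h \<le> t\<close>.  Both \<open>h\<close> and every \<open>\<partial>g/\<partial>x\<^sub>k\<close> have degree
at most \<open>t\<close> and vanish on \<open>X\<close>, so they lie in \<open>\<langle>G\<^sup>t\<rangle>\<close>, and therefore so does
\<open>g = h + (t+1)\<^sup>-\<^sup>1 \<Sum>\<^sub>k x\<^sub>k \<partial>g/\<partial>x\<^sub>k\<close>.
Only this degree-\<open>t\<close> property of \<open>\<I>(X)\<close> is used.\<close>

lemma lookup_single_mult_shift:
  fixes p :: "'a::cancel_comm_monoid_add \<Rightarrow>\<^sub>0 'b::comm_semiring_1"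
  shows "Poly_Mapping.lookup (Poly_Mapping.single a c * p) k = c * (\<Sum>q. Poly_Mapping.lookup p q when k = a + q)"
  by (simp add: lookup_mult lookup_single when_mult Sum_any_right_distrib[symmetric] mult_when)

lemma lookup_single_mult:
  fixes p :: "'a::cancel_comm_monoid_add \<Rightarrow>\<^sub>0 'b::comm_semiring_1"
  shows "Poly_Mapping.lookup (Poly_Mapping.single a c * p) (a + m) = c * Poly_Mapping.lookup p m"
  by (simp add: lookup_single_mult_shift)

lemma lookup_single_mult_eq_0:
  fixes p :: "'a::cancel_comm_monoid_add \<Rightarrow>\<^sub>0 'b::comm_semiring_1"
  shows "(\<And>m. k \<noteq> a + m) \<Longrightarrow> Poly_Mapping.lookup (Poly_Mapping.single a c * p) k = 0"
  by (simp add: lookup_single_mult_shift)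

lemma lookup_const_mult:
  fixes p :: "'a::cancel_comm_monoid_add \<Rightarrow>\<^sub>0 'b::comm_semiring_1"
  shows "Poly_Mapping.lookup (Poly_Mapping.single 0 c * p) m = c * Poly_Mapping.lookup p m"
  using lookup_single_mult[of 0 c p m] by simp

definition mvar :: "nat \<Rightarrow> mpoly" where
  "mvar k = Poly_Mapping.single (Poly_Mapping.single k 1) 1"

lemma monomial_minus_var_add:
  fixes m :: "(nat, nat) poly_mapping"
  assumes "Poly_Mapping.lookup m k \<noteq> 0"
  shows "m = (m - Poly_Mapping.single k 1) + Poly_Mapping.single k 1"
  by (rule poly_mapping_eqI) (use assms in \<open>auto simp: lookup_add lookup_minus lookup_single when_def\<close>)

definition mon_eval :: "(nat, nat) poly_mapping \<Rightarrow> (nat \<Rightarrow> real) \<Rightarrow> real" where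
  "mon_eval m x = (\<Prod>i\<in>Poly_Mapping.keys m. x i ^ Poly_Mapping.lookup m i)"

lemma mon_eval_superset:
  assumes "finite S" "Poly_Mapping.keys m \<subseteq> S"
  shows "mon_eval m x = (\<Prod>i\<in>S. x i ^ Poly_Mapping.lookup m i)"
  unfolding mon_eval_def
  by (rule prod.mono_neutral_left) (use assms in \<open>auto simp: in_keys_iff\<close>)

lemma mon_eval_add: "mon_eval (a + b) x = mon_eval a x * mon_eval b x"
proof -
  let ?S = "Poly_Mapping.keys a \<union> Poly_Mapping.keys b"
  have "mon_eval (a + b) x = (\<Prod>i\<in>?S. x i ^ Poly_Mapping.lookup (a + b) i)"
    by (rule mon_eval_superset) (auto dest: keys_add[THEN subsetD])
  also have "\<dots> = (\<Prod>i\<in>?S. x i ^ Poly_Mapping.lookup a i) * (\<Prod>i\<in>?S. x i ^ Poly_Mapping.lookup b i)"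
    by (simp add: lookup_add power_add prod.distrib)
  also have "\<dots> = mon_eval a x * mon_eval b x"
    using mon_eval_superset[of ?S a x] mon_eval_superset[of ?S b x] by simp
  finally show ?thesis .
qed

lemma mon_eval_var: "mon_eval (Poly_Mapping.single k 1) x = x k"
  by (simp add: mon_eval_def)

lemma eval_mpoly_superset:
  assumes "finite S" "Poly_Mapping.keys p \<subseteq> S"
  shows "eval_mpoly p x = (\<Sum>m\<in>S. Poly_Mapping.lookup p m * mon_eval m x)"
  unfolding eval_mpoly_def mon_eval_def[symmetric]
  by (rule sum.mono_neutral_left) (use assms in \<open>auto simp: in_keys_iff\<close>)

lemma eval_mpoly_add: "eval_mpoly (p + q) x = eval_mpoly p x + eval_mpoly q x"
proof -
  let ?S = "Poly_Mapping.keys p \<union> Poly_Mapping.keys q"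
  have "eval_mpoly (p + q) x = (\<Sum>m\<in>?S. Poly_Mapping.lookup (p + q) m * mon_eval m x)"
    by (rule eval_mpoly_superset) (auto dest: keys_add[THEN subsetD])
  also have "\<dots> = (\<Sum>m\<in>?S. Poly_Mapping.lookup p m * mon_eval m x) + (\<Sum>m\<in>?S. Poly_Mapping.lookup q m * mon_eval m x)"
    by (simp add: lookup_add distrib_right sum.distrib)
  also have "\<dots> = eval_mpoly p x + eval_mpoly q x"
    using eval_mpoly_superset[of ?S p x] eval_mpoly_superset[of ?S q x] by simp
  finally show ?thesis .
qed

lemma eval_mpoly_zero: "eval_mpoly 0 x = 0"
  by (simp add: eval_mpoly_def)

lemma eval_mpoly_sum: "eval_mpoly (sum f I) x = (\<Sum>i\<in>I. eval_mpoly (f i) x)"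
  by (induction I rule: infinite_finite_induct) (auto simp: eval_mpoly_zero eval_mpoly_add)

lemma eval_mpoly_single_mult:
  "eval_mpoly (Poly_Mapping.single a c * p) x = c * mon_eval a x * eval_mpoly p x"
proof -
  let ?S = "(\<lambda>m. a + m) ` Poly_Mapping.keys p"
  have keys_sub: "Poly_Mapping.keys (Poly_Mapping.single a c * p) \<subseteq> ?S"
    using keys_mult[of "Poly_Mapping.single a c" p] by (auto split: if_splits)
  have "eval_mpoly (Poly_Mapping.single a c * p) x
      = (\<Sum>m\<in>?S. Poly_Mapping.lookup (Poly_Mapping.single a c * p) m * mon_eval m x)"
    by (rule eval_mpoly_superset[OF _ keys_sub]) simp
  also have "\<dots> = (\<Sum>m\<in>Poly_Mapping.keys p.
                   Poly_Mapping.lookup (Poly_Mapping.single a c * p) (a + m) * mon_eval (a + m) x)"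
    by (subst sum.reindex) (auto simp: inj_on_def)
  also have "\<dots> = (\<Sum>m\<in>Poly_Mapping.keys p. c * mon_eval a x * (Poly_Mapping.lookup p m * mon_eval m x))"
    by (simp only: lookup_single_mult mon_eval_add) (simp add: mult_ac)
  also have "\<dots> = c * mon_eval a x * eval_mpoly p x"
    by (simp add: sum_distrib_left eval_mpoly_def mon_eval_def)
  finally show ?thesis .
qed

lemma eval_mpoly_var_mult: "eval_mpoly (mvar k * p) x = x k * eval_mpoly p x"
  unfolding mvar_def eval_mpoly_single_mult mon_eval_var by simp

lemma mon_deg_superset:
  assumes "finite S" "Poly_Mapping.keys m \<subseteq> S"
  shows "mon_deg m = (\<Sum>i\<in>S. Poly_Mapping.lookup m i)"
  unfolding mon_deg_def
  by (rule sum.mono_neutral_left) (use assms in \<open>auto simp: in_keys_iff\<close>)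

lemma mon_deg_add: "mon_deg (a + b) = mon_deg a + mon_deg b"
proof -
  let ?S = "Poly_Mapping.keys a \<union> Poly_Mapping.keys b"
  have "mon_deg (a + b) = (\<Sum>i\<in>?S. Poly_Mapping.lookup (a + b) i)"
    by (rule mon_deg_superset) (auto dest: keys_add[THEN subsetD])
  also have "\<dots> = (\<Sum>i\<in>?S. Poly_Mapping.lookup a i) + (\<Sum>i\<in>?S. Poly_Mapping.lookup b i)"
    by (simp add: lookup_add sum.distrib)
  also have "\<dots> = mon_deg a + mon_deg b"
    using mon_deg_superset[of ?S a] mon_deg_superset[of ?S b] by simp
  finally show ?thesis .
qed

lemma mon_deg_var: "mon_deg (Poly_Mapping.single k 1) = 1"
  by (simp add: mon_deg_def)

lemma mon_deg_le_total_deg: "m \<in> Poly_Mapping.keys p \<Longrightarrow> mon_deg m \<le> total_deg p"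
  unfolding total_deg_def by (rule Max_ge) auto

lemma total_deg_leI: "(\<And>m. m \<in> Poly_Mapping.keys p \<Longrightarrow> mon_deg m \<le> d) \<Longrightarrow> total_deg p \<le> d"
  unfolding total_deg_def by (subst Max_le_iff) auto

lemma poly_ring_zero: "0 \<in> poly_ring n"
  by (simp add: poly_ring_def)

lemma poly_ring_add: "p \<in> poly_ring n \<Longrightarrow> q \<in> poly_ring n \<Longrightarrow> p + q \<in> poly_ring n"
  unfolding poly_ring_def by (auto dest: keys_add[THEN subsetD])

lemma poly_ring_mult: "p \<in> poly_ring n \<Longrightarrow> q \<in> poly_ring n \<Longrightarrow> p * q \<in> poly_ring n"
  unfolding poly_ring_def by (fastforce dest!: keys_mult[THEN subsetD] keys_add[THEN subsetD])

lemma poly_ring_keys_subset: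
  "q \<in> poly_ring n \<Longrightarrow> Poly_Mapping.keys p \<subseteq> Poly_Mapping.keys q \<Longrightarrow> p \<in> poly_ring n"
  unfolding poly_ring_def by blast

lemma poly_ring_const: "Poly_Mapping.single 0 c \<in> poly_ring n"
  by (simp add: poly_ring_def)

lemma poly_ring_var: "k < n \<Longrightarrow> mvar k \<in> poly_ring n"
  by (simp add: mvar_def poly_ring_def)

lemma ideal_gen_zero: "0 \<in> ideal_gen n T"
  unfolding ideal_gen_def by (rule CollectI, rule exI[of _ "{}"]) auto

lemma ideal_gen_add:
  assumes "p \<in> ideal_gen n T" "q \<in> ideal_gen n T"
  shows "p + q \<in> ideal_gen n T"
proof -
  obtain F1 c1 where 1: "finite F1" "F1 \<subseteq> T" "\<forall>s\<in>F1. c1 s \<in> poly_ring n" "p = (\<Sum>s\<in>F1. c1 s * s)"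
    using assms(1) unfolding ideal_gen_def by blast
  obtain F2 c2 where 2: "finite F2" "F2 \<subseteq> T" "\<forall>s\<in>F2. c2 s \<in> poly_ring n" "q = (\<Sum>s\<in>F2. c2 s * s)"
    using assms(2) unfolding ideal_gen_def by blast
  define c where "c s = (if s \<in> F1 then c1 s else 0) + (if s \<in> F2 then c2 s else 0)" for s
  have "(\<Sum>s\<in>F1 \<union> F2. (if s \<in> F1 then c1 s else 0) * s) = p"
    unfolding 1(4) by (rule sum.mono_neutral_cong_right) (use 1 2 in auto)
  moreover have "(\<Sum>s\<in>F1 \<union> F2. (if s \<in> F2 then c2 s else 0) * s) = q"
    unfolding 2(4) by (rule sum.mono_neutral_cong_right) (use 1 2 in auto)
  ultimately have "p + q = (\<Sum>s\<in>F1 \<union> F2. c s * s)"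
    by (simp add: c_def distrib_right sum.distrib)
  moreover have "\<forall>s\<in>F1 \<union> F2. c s \<in> poly_ring n"
    using 1 2 by (auto simp: c_def poly_ring_add poly_ring_zero)
  ultimately show ?thesis unfolding ideal_gen_def mem_Collect_eq
    by (intro exI[of _ "F1 \<union> F2"] exI[of _ c]) (use 1 2 in simp)
qed

lemma ideal_gen_mult:
  assumes "r \<in> poly_ring n" "p \<in> ideal_gen n T"
  shows "r * p \<in> ideal_gen n T"
proof -
  obtain F c where 1: "finite F" "F \<subseteq> T" "\<forall>s\<in>F. c s \<in> poly_ring n" "p = (\<Sum>s\<in>F. c s * s)"
    using assms(2) unfolding ideal_gen_def by blast
  have "r * p = (\<Sum>s\<in>F. (r * c s) * s)"
    by (simp add: 1(4) sum_distrib_left mult.assoc)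
  moreover have "\<forall>s\<in>F. r * c s \<in> poly_ring n"
    using 1 assms(1) by (auto intro: poly_ring_mult)
  ultimately show ?thesis unfolding ideal_gen_def mem_Collect_eq
    by (intro exI[of _ F] exI[of _ "\<lambda>s. r * c s"]) (use 1 in simp)
qed

lemma ideal_gen_sum:
  "(\<And>i. i \<in> I \<Longrightarrow> f i \<in> ideal_gen n T) \<Longrightarrow> sum f I \<in> ideal_gen n T"
  by (induction I rule: infinite_finite_induct) (auto simp: ideal_gen_zero ideal_gen_add)

lemma lookup_pderiv_mpoly:
  "Poly_Mapping.lookup (pderiv_mpoly k p) m' =
     of_nat (Poly_Mapping.lookup m' k + 1) * Poly_Mapping.lookup p (m' + Poly_Mapping.single k 1)"
proof -
  let ?e = "Poly_Mapping.single k (1::nat)"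
  let ?a = "\<lambda>m. of_nat (Poly_Mapping.lookup m k) * Poly_Mapping.lookup p m"
  have "(?a m when m - ?e = m') = (if m = m' + ?e then ?a m else 0)" for m
  proof (cases "m = m' + ?e")
    case False
    then have "Poly_Mapping.lookup m k = 0" if "m - ?e = m'"
      using monomial_minus_var_add[of m k] that by auto
    with False show ?thesis by (auto simp: when_def)
  qed simp
  then have "Poly_Mapping.lookup (pderiv_mpoly k p) m' =
             (\<Sum>m\<in>Poly_Mapping.keys p. if m = m' + ?e then ?a m else 0)"
    by (simp add: pderiv_mpoly_def lookup_sum lookup_single)
  also have "\<dots> = of_nat (Poly_Mapping.lookup m' k + 1) * Poly_Mapping.lookup p (m' + ?e)"
    by (simp add: sum.delta' lookup_add in_keys_iff)
  finally show ?thesis .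
qed

lemma keys_pderiv_mpoly:
  "m \<in> Poly_Mapping.keys (pderiv_mpoly k p) \<Longrightarrow> m + Poly_Mapping.single k 1 \<in> Poly_Mapping.keys p"
  by (simp add: in_keys_iff lookup_pderiv_mpoly)

lemma pderiv_mpoly_in_poly_ring:
  assumes "p \<in> poly_ring n"
  shows "pderiv_mpoly k p \<in> poly_ring n"
  unfolding poly_ring_def
proof (intro CollectI ballI subsetI)
  fix m i assume m: "m \<in> Poly_Mapping.keys (pderiv_mpoly k p)" and i: "i \<in> Poly_Mapping.keys m"
  have "i \<in> Poly_Mapping.keys (m + Poly_Mapping.single k 1)"
    using i by (simp add: in_keys_iff lookup_add)
  with keys_pderiv_mpoly[OF m] assms show "i \<in> {..<n}"
    by (auto simp: poly_ring_def)
qed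

lemma total_deg_pderiv_mpoly:
  assumes "total_deg p \<le> d + 1"
  shows "total_deg (pderiv_mpoly k p) \<le> d"
proof (rule total_deg_leI)
  fix m assume "m \<in> Poly_Mapping.keys (pderiv_mpoly k p)"
  then have "mon_deg (m + Poly_Mapping.single k 1) \<le> d + 1"
    using keys_pderiv_mpoly mon_deg_le_total_deg assms by (meson le_trans)
  then show "mon_deg m \<le> d"
    unfolding mon_deg_add mon_deg_var by simp
qed

lemma lookup_var_mult_pderiv_mpoly:
  "Poly_Mapping.lookup (mvar k * pderiv_mpoly k p) m =
     of_nat (Poly_Mapping.lookup m k) * Poly_Mapping.lookup p m"
proof (cases "Poly_Mapping.lookup m k = 0")
  case True
  then have "m \<noteq> Poly_Mapping.single k 1 + m'" for m'
    by (auto simp: lookup_add)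
  with True show ?thesis
    by (simp add: mvar_def lookup_single_mult_eq_0)
next
  case False
  let ?e = "Poly_Mapping.single k (1::nat)"
  have m: "m = ?e + (m - ?e)"
    using monomial_minus_var_add[OF False] by (simp add: add.commute)
  have "Poly_Mapping.lookup (mvar k * pderiv_mpoly k p) m = Poly_Mapping.lookup (pderiv_mpoly k p) (m - ?e)"
    using lookup_single_mult[of ?e 1 "pderiv_mpoly k p" "m - ?e"] m by (simp add: mvar_def)
  also have "\<dots> = of_nat (Poly_Mapping.lookup m k) * Poly_Mapping.lookup p m"
    using False m by (simp add: lookup_pderiv_mpoly lookup_minus add.commute)
  finally show ?thesis .
qed

definition euler_op :: "nat \<Rightarrow> mpoly \<Rightarrow> mpoly" where
  "euler_op n p = (\<Sum>k<n. mvar k * pderiv_mpoly k p)"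

lemma lookup_euler_op:
  assumes "p \<in> poly_ring n"
  shows "Poly_Mapping.lookup (euler_op n p) m = of_nat (mon_deg m) * Poly_Mapping.lookup p m"
proof (cases "m \<in> Poly_Mapping.keys p")
  case True
  then have "Poly_Mapping.keys m \<subseteq> {..<n}"
    using assms by (auto simp: poly_ring_def)
  then have "mon_deg m = (\<Sum>k<n. Poly_Mapping.lookup m k)"
    by (simp add: mon_deg_superset)
  then show ?thesis
    by (simp add: euler_op_def lookup_sum lookup_var_mult_pderiv_mpoly sum_distrib_right)
next
  case False
  then show ?thesis
    by (simp add: euler_op_def lookup_sum lookup_var_mult_pderiv_mpoly in_keys_iff)
qed

lemma eval_euler_op: "eval_mpoly (euler_op n p) x = (\<Sum>k<n. x k * eval_mpoly (pderiv_mpoly k p) x)"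
  by (simp add: euler_op_def eval_mpoly_sum eval_mpoly_var_mult)

lemma euler_op_in_ideal_gen:
  "(\<And>k. k < n \<Longrightarrow> pderiv_mpoly k p \<in> ideal_gen n T) \<Longrightarrow> euler_op n p \<in> ideal_gen n T"
  unfolding euler_op_def by (auto intro: ideal_gen_sum ideal_gen_mult poly_ring_var)

lemma lookup_sub_euler_op:
  assumes "p \<in> poly_ring n"
  shows "Poly_Mapping.lookup (p - Poly_Mapping.single 0 c * euler_op n p) m =
           (1 - c * of_nat (mon_deg m)) * Poly_Mapping.lookup p m"
  by (simp add: lookup_minus lookup_const_mult lookup_euler_op[OF assms] algebra_simps)

lemma eval_mpoly_sub_euler_op:
  "eval_mpoly (p - Poly_Mapping.single 0 c * euler_op n p) x =
     eval_mpoly p x - c * (\<Sum>k<n. x k * eval_mpoly (pderiv_mpoly k p) x)"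
proof -
  let ?q = "Poly_Mapping.single 0 c * euler_op n p"
  have "eval_mpoly p x = eval_mpoly (p - ?q + ?q) x"
    by simp
  also have "\<dots> = eval_mpoly (p - ?q) x + c * (\<Sum>k<n. x k * eval_mpoly (pderiv_mpoly k p) x)"
    by (simp only: eval_mpoly_add eval_mpoly_single_mult eval_euler_op) (simp add: mon_eval_def)
  finally show ?thesis
    by simp
qed

lemma poly_ring_sub_euler_op:
  assumes "p \<in> poly_ring n"
  shows "p - Poly_Mapping.single 0 c * euler_op n p \<in> poly_ring n"
  by (rule poly_ring_keys_subset[OF assms]) (auto simp: in_keys_iff lookup_sub_euler_op[OF assms])

lemma total_deg_sub_euler_op:
  assumes "p \<in> poly_ring n" "total_deg p \<le> d + 1"
  shows "total_deg (p - Poly_Mapping.single 0 (1 / (real d + 1)) * euler_op n p) \<le> d"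
proof (rule total_deg_leI)
  fix m assume "m \<in> Poly_Mapping.keys (p - Poly_Mapping.single 0 (1 / (real d + 1)) * euler_op n p)"
  then have "m \<in> Poly_Mapping.keys p" "mon_deg m \<noteq> d + 1"
    by (auto simp: in_keys_iff lookup_sub_euler_op[OF assms(1)])
  with mon_deg_le_total_deg[of m p] assms(2) show "mon_deg m \<le> d"
    by linarith
qed

theorem lemma2:
  fixes n t :: nat and X :: "(nat \<Rightarrow> real) set" and G :: "mpoly set" and g :: mpoly
  assumes "finite X" and "X \<subseteq> point_space n"
    and "G \<subseteq> poly_ring n"
    and "vanishing_ideal n X = ideal_gen n G"
    and "t > 0"
    and "\<forall>h \<in> vanishing_ideal n X. total_deg h \<le> t \<longrightarrow> h \<in> ideal_gen n (deg_trunc G t)"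
    and "g \<in> vanishing_ideal n X" and "total_deg g \<le> t + 1"
    and "\<forall>k < n. \<forall>x \<in> X. eval_mpoly (pderiv_mpoly k g) x = 0"
  shows "g \<in> ideal_gen n (deg_trunc G t)"
proof -
  let ?J = "ideal_gen n (deg_trunc G t)"
  define h where "h = g - Poly_Mapping.single 0 (1 / (real t + 1)) * euler_op n g"
  have g_ring: "g \<in> poly_ring n"
    using assms(7) by (simp add: vanishing_ideal_def)
  have "pderiv_mpoly k g \<in> ?J" if "k < n" for k
  proof -
    have "pderiv_mpoly k g \<in> vanishing_ideal n X"
      using assms(9) that pderiv_mpoly_in_poly_ring[OF g_ring] by (simp add: vanishing_ideal_def)
    then show ?thesis
      using assms(6) total_deg_pderiv_mpoly[OF assms(8)] by blast
  qed
  then have euler_in_J: "euler_op n g \<in> ?J"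
    by (rule euler_op_in_ideal_gen)
  have "h \<in> vanishing_ideal n X"
    using assms(7,9) poly_ring_sub_euler_op[OF g_ring]
    by (simp add: vanishing_ideal_def h_def eval_mpoly_sub_euler_op)
  then have "h \<in> ?J"
    using assms(6) total_deg_sub_euler_op[OF g_ring assms(8)] by (simp add: h_def)
  then have "h + Poly_Mapping.single 0 (1 / (real t + 1)) * euler_op n g \<in> ?J"
    by (intro ideal_gen_add ideal_gen_mult poly_ring_const euler_in_J)
  then show ?thesis
    by (simp add: h_def)
qed

end
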